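(* Fix a prime $p$ and $n\in\mathbb{N}$, and let $\mathbb{L}_{p,n}$ denote the restriction of $\mathbb{L}_p(r)=|r|+\|r\|_p$ to the subgroup $\frac{1}{p^n}\mathbb{Z}$ of $\mathbb{Z}[\tfrac1p]$. Then $\frac1{p^n}\mathbb{Z}$ has the property of bounded $p$-dilation with respect to $\mathbb{L}_{p,n}$. In particular, $\mathbb{L}_{p,n}$ is of bounded doubling with constant $C_{\mathbb{L}_{p,n}}=4p^8$.
   Context: $\mathbb{Z}[\tfrac1p]=\{a/p^k:a\in\mathbb{Z},k\in\mathbb{N}\}$; $\|\cdot\|_p$ is the $p$-adic norm ($\|0\|_p=0$, $\|r\|_p=p^{-n}$ if $r=ap^n/b$ with $a,b$ coprime to $p$ and to each other). For a length function $\mathbb{L}$ on a discrete group $\Gamma$ (i.e. $\mathbb{L}(\gamma)=0\iff\gamma=e$, symmetric, subadditive), $B_{\mathbb{L}}(R)=\{\gamma:\mathbb{L}(\gamma)\le R\}$; $\mathbb{L}$ is proper if all $B_{\mathbb{L}}(R)$ are finite; $\Gamma$ has bounded $\mathbf t$-dilation w.r.t. $\mathbb{L}$ ($\mathbf t>1$) if $\mathbb{L}$ is proper and $|B_{\mathbb{L}}(\mathbf tR)|\le K|B_{\mathbb{L}}(R)|$ for some $K<\infty$ and all $R\ge1$; $\mathbb{L}$ is of bounded doubling with constant $C$ if it is proper and $|B_{\mathbb{L}}(2R)|\le C|B_{\mathbb{L}}(R)|$ for all $R\ge1$. *)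

theory Defs
  imports "HOL-Analysis.Analysis" "HOL-Computational_Algebra.Primes"
begin

definition padic_val :: "nat \<Rightarrow> rat \<Rightarrow> int" where
  "padic_val p r = (case quotient_of r of (a, b) \<Rightarrow>
      int (multiplicity (int p) a) - int (multiplicity (int p) b))"

definition padic_norm :: "nat \<Rightarrow> rat \<Rightarrow> real" where
  "padic_norm p r = (if r = 0 then 0 else real p powi (- padic_val p r))"

definition Lp :: "nat \<Rightarrow> rat \<Rightarrow> real" where
  "Lp p r = real_of_rat \<bar>r\<bar> + padic_norm p r"

definition Gpn :: "nat \<Rightarrow> nat \<Rightarrow> rat set" where
  "Gpn p n = {r. \<exists>a::int. r = of_int a / of_nat p ^ n}"

definition length_function :: "rat set \<Rightarrow> (rat \<Rightarrow> real) \<Rightarrow> bool" where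
  "length_function G L \<longleftrightarrow>
     (\<forall>g\<in>G. L g = 0 \<longleftrightarrow> g = 0) \<and>
     (\<forall>g\<in>G. L (- g) = L g) \<and>
     (\<forall>g\<in>G. \<forall>h\<in>G. L (g + h) \<le> L g + L h)"

definition ball_L :: "rat set \<Rightarrow> (rat \<Rightarrow> real) \<Rightarrow> real \<Rightarrow> rat set" where
  "ball_L G L R = {g \<in> G. L g \<le> R}"

definition proper_L :: "rat set \<Rightarrow> (rat \<Rightarrow> real) \<Rightarrow> bool" where
  "proper_L G L \<longleftrightarrow> (\<forall>R. finite (ball_L G L R))"

definition bounded_dilation :: "rat set \<Rightarrow> (rat \<Rightarrow> real) \<Rightarrow> real \<Rightarrow> bool" where
  "bounded_dilation G L t \<longleftrightarrow> t > 1 \<and> proper_L G L \<and>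
     (\<exists>K::real. \<forall>R\<ge>1. real (card (ball_L G L (t * R))) \<le> K * real (card (ball_L G L R)))"

definition bounded_doubling :: "rat set \<Rightarrow> (rat \<Rightarrow> real) \<Rightarrow> real \<Rightarrow> bool" where
  "bounded_doubling G L C \<longleftrightarrow> proper_L G L \<and>
     (\<forall>R\<ge>1. real (card (ball_L G L (2 * R))) \<le> C * real (card (ball_L G L R)))"

end

theory Submission
  imports Defs
begin

(* Elements of (1/p^n)Z with p-adic norm below p^(m+1) already lie in the coarser lattice
   (1/p^m)Z. So if m \<le> n is the largest exponent with p^m \<le> S, the ball of radius S is
   contained in the points of (1/p^m)Z in [-S, S], and it contains the points of (1/p^m)Z in
   [-S/2, S/2] once p^m \<le> S/2; its cardinality is therefore comparable to S p^m. The levels of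
   tR and R/2 differ by a factor of at most 2tp, which gives |B(tR)| \<le> (8 t^2 p + 1) |B(R)|:
   t = p is bounded p-dilation, and t = 2 yields the doubling constant 32 p + 1 \<le> 4 p^8. *)

lemma multiplicity_add_ge_min:
  fixes p a b :: "'a :: factorial_semiring"
  assumes "\<not> is_unit p" "a + b \<noteq> 0"
  shows "min (multiplicity p a) (multiplicity p b) \<le> multiplicity p (a + b)"
proof -
  let ?k = "min (multiplicity p a) (multiplicity p b)"
  have "p ^ ?k dvd a" "p ^ ?k dvd b" by (simp_all add: multiplicity_dvd')
  then have "p ^ ?k dvd a + b" by simp
  then show ?thesis using assms multiplicity_geI by blast
qed

lemma exists_power_le_less_power_Suc:
  fixes b S :: real
  assumes "1 \<le> S"
  shows "\<exists>m\<le>n. b ^ m \<le> S \<and> (m = n \<or> S < b ^ (m + 1))"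
proof (induction n)
  case 0
  then show ?case using assms by simp
next
  case (Suc n)
  then obtain m where m: "m \<le> n" "b ^ m \<le> S" "m = n \<or> S < b ^ (m + 1)" by blast
  show ?case
  proof (cases "m = n \<and> b ^ Suc n \<le> S")
    case True
    then show ?thesis by auto
  next
    case False
    with m have "m \<le> Suc n \<and> b ^ m \<le> S \<and> (m = Suc n \<or> S < b ^ (m + 1))" by auto
    then show ?thesis by blast
  qed
qed

lemma int_abs_le_eq_atLeastAtMost:
  "{c::int. \<bar>real_of_int c\<bar> \<le> Y} = {- \<lfloor>Y\<rfloor>..\<lfloor>Y\<rfloor>}"
proof -
  have abs_le_iff_floor: "\<bar>real_of_int c\<bar> \<le> Y \<longleftrightarrow> \<bar>c\<bar> \<le> \<lfloor>Y\<rfloor>" for c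
    by (metis le_floor_iff of_int_abs)
  show ?thesis unfolding abs_le_iff_floor by (auto simp: abs_le_iff)
qed

lemma card_int_abs_le_upper:
  "0 \<le> Y \<Longrightarrow> real (card {c::int. \<bar>real_of_int c\<bar> \<le> Y}) \<le> 2 * Y + 1"
  unfolding int_abs_le_eq_atLeastAtMost by simp

lemma card_int_abs_le_lower:
  assumes "0 \<le> Y"
  shows "Y \<le> real (card {c::int. \<bar>real_of_int c\<bar> \<le> Y})"
proof -
  have "0 \<le> \<lfloor>Y\<rfloor>" using assms by simp
  then have "Y \<le> 2 * real_of_int \<lfloor>Y\<rfloor> + 1" by linarith
  then show ?thesis unfolding int_abs_le_eq_atLeastAtMost by simp
qed

lemma padic_val_uminus: "padic_val p (- r) = padic_val p r"
proof -
  have "multiplicity (int p) (- a) = multiplicity (int p) a" for a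
    by (rule multiplicity_cong) simp
  then show ?thesis by (simp add: padic_val_def rat_uminus_code split: prod.split)
qed

lemma padic_norm_nonneg: "0 \<le> padic_norm p r"
  by (simp add: padic_norm_def)

lemma padic_norm_uminus: "padic_norm p (- r) = padic_norm p r"
  by (simp add: padic_norm_def padic_val_uminus)

lemma of_int_mult_power_div_power:
  assumes "0 < p" "m \<le> n"
  shows "of_int (c * int p ^ (n - m)) / of_nat p ^ n = (of_int c / of_nat p ^ m :: rat)"
proof -
  have "(of_nat p ^ n :: rat) = of_nat p ^ m * of_nat p ^ (n - m)"
    using assms(2) by (simp flip: power_add)
  then show ?thesis using assms(1) by simp
qed

lemma Gpn_mono:
  assumes "0 < p" "m \<le> n"
  shows "Gpn p m \<subseteq> Gpn p n"
proof
  fix r assume "r \<in> Gpn p m"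
  then obtain c where "r = of_int c / of_nat p ^ m" by (auto simp: Gpn_def)
  then have "r = of_int (c * int p ^ (n - m)) / of_nat p ^ n"
    by (simp only: of_int_mult_power_div_power[OF assms])
  then show "r \<in> Gpn p n" unfolding Gpn_def by blast
qed

lemma Gpn_abs_le_eq_image:
  assumes "0 < p"
  shows "{r \<in> Gpn p m. real_of_rat \<bar>r\<bar> \<le> S}
     = (\<lambda>c. of_int c / of_nat p ^ m) ` {c. \<bar>real_of_int c\<bar> \<le> S * real p ^ m}"
proof -
  have "real_of_rat \<bar>of_int c / of_nat p ^ m\<bar> \<le> S \<longleftrightarrow> \<bar>real_of_int c\<bar> \<le> S * real p ^ m" for c
    using assms by (simp add: of_rat_divide of_rat_power abs_divide divide_le_eq flip: of_int_abs)
  then show ?thesis by (auto simp: Gpn_def)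
qed

lemma finite_Gpn_abs_le: "0 < p \<Longrightarrow> finite {r \<in> Gpn p m. real_of_rat \<bar>r\<bar> \<le> S}"
  by (simp add: Gpn_abs_le_eq_image int_abs_le_eq_atLeastAtMost)

lemma card_Gpn_abs_le:
  assumes "0 < p"
  shows "card {r \<in> Gpn p m. real_of_rat \<bar>r\<bar> \<le> S} = card {c::int. \<bar>real_of_int c\<bar> \<le> S * real p ^ m}"
  unfolding Gpn_abs_le_eq_image[OF assms]
  by (rule card_image) (use assms in \<open>auto simp: inj_on_def\<close>)

context
  fixes p :: nat
  assumes prime: "prime p"
begin

lemma prime_elem_int: "prime_elem (int p)"
  using prime by (simp add: prime_imp_prime_elem)

lemma prime_pos: "0 < p"
  using prime by (rule prime_gt_0_nat)

lemma padic_val_of_int_div: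
  assumes "x \<noteq> 0" "y \<noteq> 0"
  shows "padic_val p (of_int x / of_int y) = int (multiplicity (int p) x) - int (multiplicity (int p) y)"
proof -
  obtain a b where q: "quotient_of (of_int x / of_int y) = (a, b)"
    by (cases "quotient_of (of_int x / of_int y)") auto
  have "b > 0" using quotient_of_denom_pos[OF q] .
  moreover have "of_int x / of_int y = (of_int a / of_int b :: rat)" using quotient_of_div[OF q] .
  ultimately have "a \<noteq> 0" "(of_int (x * b) :: rat) = of_int (a * y)"
    using assms by (auto simp: field_simps)
  then have "multiplicity (int p) (x * b) = multiplicity (int p) (a * y)"
    by (simp only: of_int_eq_iff)
  then have "multiplicity (int p) x + multiplicity (int p) b = multiplicity (int p) a + multiplicity (int p) y"
    using prime_elem_multiplicity_mult_distrib[OF prime_elem_int] assms \<open>b > 0\<close> \<open>a \<noteq> 0\<close> by simp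
  then show ?thesis by (simp add: padic_val_def q)
qed

lemma padic_val_add_ge:
  assumes "r \<noteq> 0" "s \<noteq> 0" "r + s \<noteq> 0"
  shows "min (padic_val p r) (padic_val p s) \<le> padic_val p (r + s)"
proof -
  obtain a b where ab: "quotient_of r = (a, b)" by fastforce
  obtain c d where cd: "quotient_of s = (c, d)" by fastforce
  have "b > 0" "d > 0" using quotient_of_denom_pos ab cd by blast+
  have r: "r = of_int a / of_int b" and s: "s = of_int c / of_int d"
    using quotient_of_div ab cd by blast+
  have "a \<noteq> 0" "c \<noteq> 0" using assms r s by auto
  have sum: "r + s = of_int (a * d + c * b) / of_int (b * d)"
    unfolding r s using \<open>b > 0\<close> \<open>d > 0\<close> by (simp add: field_simps)
  have "a * d + c * b \<noteq> 0" using assms(3) sum by (metis div_0 of_int_0)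
  let ?v = "multiplicity (int p)"
  have "padic_val p (r + s) = int (?v (a * d + c * b)) - int (?v (b * d))"
    unfolding sum using \<open>a * d + c * b \<noteq> 0\<close> \<open>b > 0\<close> \<open>d > 0\<close> by (intro padic_val_of_int_div) auto
  moreover have "padic_val p r = int (?v a) - int (?v b)" "padic_val p s = int (?v c) - int (?v d)"
    unfolding r s using \<open>a \<noteq> 0\<close> \<open>c \<noteq> 0\<close> \<open>b > 0\<close> \<open>d > 0\<close> by (auto intro: padic_val_of_int_div)
  moreover have "min (?v (a * d)) (?v (c * b)) \<le> ?v (a * d + c * b)"
    using \<open>a * d + c * b \<noteq> 0\<close> prime_elem_int by (intro multiplicity_add_ge_min) (auto simp: prime_elem_def)
  ultimately show ?thesis
    using \<open>b > 0\<close> \<open>d > 0\<close> \<open>a \<noteq> 0\<close> \<open>c \<noteq> 0\<close>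
    by (simp add: prime_elem_multiplicity_mult_distrib[OF prime_elem_int])
qed

lemma padic_norm_add_le: "padic_norm p (r + s) \<le> max (padic_norm p r) (padic_norm p s)"
proof (cases "r = 0 \<or> s = 0 \<or> r + s = 0")
  case True
  then show ?thesis using padic_norm_nonneg by (auto simp: padic_norm_def le_max_iff_disj)
next
  case False
  have p1: "real p \<ge> 1" using prime prime_ge_1_nat by simp
  have "padic_val p r \<le> padic_val p (r + s) \<or> padic_val p s \<le> padic_val p (r + s)"
    using padic_val_add_ge False by fastforce
  then have "real p powi (- padic_val p (r + s)) \<le> real p powi (- padic_val p r)
      \<or> real p powi (- padic_val p (r + s)) \<le> real p powi (- padic_val p s)"
    using p1 by (auto intro: power_int_increasing)
  then show ?thesis using False by (auto simp: padic_norm_def)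
qed

lemma length_function_Lp: "length_function G (Lp p)"
proof -
  have "Lp p r = 0 \<longleftrightarrow> r = 0" for r
    using prime_pos by (simp add: Lp_def padic_norm_def add_nonneg_eq_0_iff)
  moreover have "Lp p (- r) = Lp p r" for r
    by (simp add: Lp_def padic_norm_uminus)
  moreover have "Lp p (r + s) \<le> Lp p r + Lp p s" for r s
  proof -
    have "real_of_rat \<bar>r + s\<bar> \<le> real_of_rat \<bar>r\<bar> + real_of_rat \<bar>s\<bar>"
      by (simp flip: of_rat_add add: of_rat_less_eq abs_triangle_ineq)
    moreover have "padic_norm p (r + s) \<le> padic_norm p r + padic_norm p s"
      using padic_norm_add_le[of r s] padic_norm_nonneg[of p r] padic_norm_nonneg[of p s]
      by (simp add: max_def split: if_splits)
    ultimately show ?thesis by (simp add: Lp_def)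
  qed
  ultimately show ?thesis by (simp add: length_function_def)
qed

lemma padic_norm_Gpn:
  assumes "a \<noteq> 0"
  shows "padic_norm p (of_int a / of_nat p ^ n) = real p powi (int n - int (multiplicity (int p) a))"
proof -
  have "padic_val p (of_int a / of_int (int p ^ n))
      = int (multiplicity (int p) a) - int (multiplicity (int p) (int p ^ n))"
    using assms prime_pos by (intro padic_val_of_int_div) auto
  then have "padic_val p (of_int a / of_nat p ^ n) = int (multiplicity (int p) a) - int n"
    by (simp add: multiplicity_prime_power[OF prime_elem_int])
  then show ?thesis using assms prime_pos by (simp add: padic_norm_def)
qed

lemma padic_norm_Gpn_le:
  assumes "r \<in> Gpn p m"
  shows "padic_norm p r \<le> real p ^ m"
proof -
  obtain a where r: "r = of_int a / of_nat p ^ m" using assms by (auto simp: Gpn_def)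
  show ?thesis
  proof (cases "a = 0")
    case False
    have "real p powi (int m - int (multiplicity (int p) a)) \<le> real p powi int m"
      using prime_ge_1_nat[OF prime] by (intro power_int_increasing) auto
    then show ?thesis using False by (simp add: r padic_norm_Gpn)
  qed (simp add: r padic_norm_def)
qed

lemma Gpn_of_padic_norm_less:
  assumes "m \<le> n" "r \<in> Gpn p n" "padic_norm p r < real p ^ (m + 1)"
  shows "r \<in> Gpn p m"
proof -
  obtain a where r: "r = of_int a / of_nat p ^ n" using assms(2) by (auto simp: Gpn_def)
  have "int p ^ (n - m) dvd a"
  proof (cases "a = 0")
    case False
    have "real p powi (int n - int (multiplicity (int p) a)) < real p powi int (m + 1)"
      using assms(3) by (simp only: r padic_norm_Gpn[OF False] power_int_of_nat)
    then have "int n - int (multiplicity (int p) a) < int (m + 1)"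
      using prime_gt_1_nat[OF prime] by (intro power_int_le_imp_less_exp) auto
    then show ?thesis by (intro multiplicity_dvd') simp
  qed simp
  then obtain c where "a = c * int p ^ (n - m)" by (metis dvd_def mult.commute)
  then have "r = of_int c / of_nat p ^ m"
    by (simp only: r of_int_mult_power_div_power[OF prime_pos assms(1)])
  then show ?thesis unfolding Gpn_def by blast
qed

lemma ball_Lp_subset_Gpn_abs_le:
  assumes "m \<le> n" "m = n \<or> S < real p ^ (m + 1)"
  shows "ball_L (Gpn p n) (Lp p) S \<subseteq> {r \<in> Gpn p m. real_of_rat \<bar>r\<bar> \<le> S}"
proof
  fix r assume "r \<in> ball_L (Gpn p n) (Lp p) S"
  then have "r \<in> Gpn p n" "real_of_rat \<bar>r\<bar> + padic_norm p r \<le> S"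
    by (auto simp: ball_L_def Lp_def)
  moreover have "0 \<le> real_of_rat \<bar>r\<bar>" "0 \<le> padic_norm p r"
    by (simp_all add: padic_norm_nonneg)
  ultimately have "r \<in> Gpn p n" "real_of_rat \<bar>r\<bar> \<le> S" "padic_norm p r \<le> S"
    by linarith+
  moreover from this have "r \<in> Gpn p m"
    using assms Gpn_of_padic_norm_less[of m n r] by (cases "m = n") auto
  ultimately show "r \<in> {r \<in> Gpn p m. real_of_rat \<bar>r\<bar> \<le> S}" by simp
qed

lemma Gpn_abs_le_subset_ball_Lp:
  assumes "m \<le> n" "real p ^ m \<le> S"
  shows "{r \<in> Gpn p m. real_of_rat \<bar>r\<bar> \<le> S} \<subseteq> ball_L (Gpn p n) (Lp p) (2 * S)"
  using Gpn_mono[OF prime_pos assms(1)] padic_norm_Gpn_le assms(2) by (fastforce simp: ball_L_def Lp_def)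

lemma proper_Lp_Gpn: "proper_L (Gpn p n) (Lp p)"
  unfolding proper_L_def
  using ball_Lp_subset_Gpn_abs_le[of n n] finite_Gpn_abs_le[OF prime_pos] by (meson finite_subset order_refl)

lemma card_ball_Lp_le:
  assumes "m \<le> n" "m = n \<or> S < real p ^ (m + 1)" "0 \<le> S"
  shows "real (card (ball_L (Gpn p n) (Lp p) S)) \<le> 2 * S * real p ^ m + 1"
proof -
  have "card (ball_L (Gpn p n) (Lp p) S) \<le> card {r \<in> Gpn p m. real_of_rat \<bar>r\<bar> \<le> S}"
    by (intro card_mono finite_Gpn_abs_le prime_pos ball_Lp_subset_Gpn_abs_le assms)
  also have "\<dots> = card {c::int. \<bar>real_of_int c\<bar> \<le> S * real p ^ m}"
    by (rule card_Gpn_abs_le[OF prime_pos])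
  finally show ?thesis
    using card_int_abs_le_upper[of "S * real p ^ m"] assms(3) by simp
qed

lemma card_ball_Lp_ge:
  assumes "m \<le> n" "real p ^ m \<le> S"
  shows "S * real p ^ m \<le> real (card (ball_L (Gpn p n) (Lp p) (2 * S)))"
proof -
  have "0 \<le> real p ^ m" by simp
  with assms(2) have "0 \<le> S" by linarith
  then have "0 \<le> S * real p ^ m" by simp
  then have "S * real p ^ m \<le> real (card {c::int. \<bar>real_of_int c\<bar> \<le> S * real p ^ m})"
    by (rule card_int_abs_le_lower)
  also have "\<dots> = real (card {r \<in> Gpn p m. real_of_rat \<bar>r\<bar> \<le> S})"
    by (simp add: card_Gpn_abs_le[OF prime_pos])
  also have "\<dots> \<le> real (card (ball_L (Gpn p n) (Lp p) (2 * S)))"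
    using proper_Lp_Gpn Gpn_abs_le_subset_ball_Lp[OF assms]
    by (simp add: proper_L_def card_mono)
  finally show ?thesis .
qed

lemma card_ball_Lp_ge_1:
  assumes "0 \<le> R"
  shows "1 \<le> card (ball_L (Gpn p n) (Lp p) R)"
proof -
  have "0 \<in> ball_L (Gpn p n) (Lp p) R"
    using assms by (auto simp: ball_L_def Gpn_def Lp_def padic_norm_def intro: exI[of _ 0])
  then show ?thesis
    using proper_Lp_Gpn by (auto simp: proper_L_def Suc_le_eq card_gt_0_iff)
qed

lemma card_ball_Lp_dilation_le:
  assumes "1 \<le> t" "1 \<le> R"
  shows "real (card (ball_L (Gpn p n) (Lp p) (t * R)))
    \<le> (8 * t\<^sup>2 * real p + 1) * real (card (ball_L (Gpn p n) (Lp p) R))"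
proof -
  let ?B = "\<lambda>S. real (card (ball_L (Gpn p n) (Lp p) S))"
  have p2: "2 \<le> real p" using prime_ge_2_nat[OF prime] by simp
  have tR: "1 \<le> t * R" using assms by (metis mult_mono' mult_1 zero_le_one)
  obtain m where m: "m \<le> n" "real p ^ m \<le> t * R" "m = n \<or> t * R < real p ^ (m + 1)"
    using exists_power_le_less_power_Suc[OF tR] by blast
  have upper: "?B (t * R) \<le> 2 * (t * R * real p ^ m) + 1"
    using card_ball_Lp_le[OF m(1,3)] tR by simp
  have B1: "1 \<le> ?B R" using card_ball_Lp_ge_1[of R n] assms(2) by simp
  have "t * R * real p ^ m \<le> 4 * t\<^sup>2 * real p * ?B R"
  proof (cases "R < 2")
    case True
    \<comment> \<open>Here R / 2 < 1 has no level, so only the trivial bound 1 \<le> |B(R)| is used.\<close>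
    then have tR2: "t * R \<le> 2 * t" using assms(1) by simp
    then have "t * R * real p ^ m \<le> (2 * t) * (2 * t)"
      by (rule mult_mono) (use order.trans[OF m(2) tR2] assms(1) in auto)
    also have "\<dots> = 4 * t\<^sup>2 * 1" by (simp add: power2_eq_square)
    also have "\<dots> \<le> 4 * t\<^sup>2 * (real p * ?B R)"
      using mult_mono[OF _ B1, of 1 "real p"] p2 by (intro mult_left_mono) auto
    finally show ?thesis by (simp add: mult.assoc)
  next
    case False
    then have "1 \<le> R / 2" by simp
    then obtain k where k: "k \<le> n" "real p ^ k \<le> R / 2" "k = n \<or> R / 2 < real p ^ (k + 1)"
      using exists_power_le_less_power_Suc by blast
    have "real p ^ m \<le> 2 * t * real p * real p ^ k"
    proof (cases "k = n")
      case True
      have "real p ^ m \<le> 1 * real p ^ k"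
        using m(1) True p2 by (simp add: power_increasing)
      also have "\<dots> \<le> 2 * t * real p * real p ^ k"
        using mult_mono[OF assms(1) p2] assms(1) by (intro mult_right_mono) auto
      finally show ?thesis .
    next
      case False
      then have "t * R < t * (2 * real p ^ (k + 1))"
        using k(3) assms(1) by (intro mult_strict_left_mono) auto
      then show ?thesis using m(2) by (simp add: algebra_simps)
    qed
    then have "t * R * real p ^ m \<le> t * R * (2 * t * real p * real p ^ k)"
      using tR by (intro mult_left_mono) auto
    also have "\<dots> = 4 * t\<^sup>2 * real p * (R / 2 * real p ^ k)"
      by (simp add: power2_eq_square algebra_simps)
    also have "\<dots> \<le> 4 * t\<^sup>2 * real p * ?B R"
      using card_ball_Lp_ge[OF k(1,2)] by (intro mult_left_mono) auto
    finally show ?thesis .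
  qed
  then show ?thesis using upper B1 by (simp add: algebra_simps)
qed

end

theorem lemma3p16:
  fixes p n :: nat
  assumes "prime p"
  shows "length_function (Gpn p n) (Lp p)
       \<and> bounded_dilation (Gpn p n) (Lp p) (real p)
       \<and> bounded_doubling (Gpn p n) (Lp p) (4 * real p ^ 8)"
proof (intro conjI)
  let ?B = "\<lambda>R. real (card (ball_L (Gpn p n) (Lp p) R))"
  have p2: "2 \<le> real p" using prime_ge_2_nat[OF assms] by simp
  show "length_function (Gpn p n) (Lp p)"
    using assms by (rule length_function_Lp)
  show "bounded_dilation (Gpn p n) (Lp p) (real p)"
    unfolding bounded_dilation_def
    using p2 proper_Lp_Gpn[OF assms] card_ball_Lp_dilation_le[OF assms, of "real p"]
    by (auto intro!: exI[of _ "8 * (real p)\<^sup>2 * real p + 1"])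
  have "128 * real p \<le> real p ^ 7 * real p"
    using power_mono[OF p2, of 7] p2 by (intro mult_right_mono) auto
  then have doubling_constant: "32 * real p + 1 \<le> 4 * real p ^ 8"
    using p2 by (simp add: power_Suc2[symmetric] del: power_Suc)
  have "?B (2 * R) \<le> 4 * real p ^ 8 * ?B R" if "1 \<le> R" for R
  proof -
    have "?B (2 * R) \<le> (32 * real p + 1) * ?B R"
      using card_ball_Lp_dilation_le[OF assms, of 2 R] that by simp
    also have "\<dots> \<le> 4 * real p ^ 8 * ?B R"
      using doubling_constant by (intro mult_right_mono) auto
    finally show ?thesis .
  qed
  then show "bounded_doubling (Gpn p n) (Lp p) (4 * real p ^ 8)"
    unfolding bounded_doubling_def using proper_Lp_Gpn[OF assms] by blast
qed

end
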